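(* For every positive integer $n$, the variety of complex $n$-dimensional nilpotent mono Leibniz algebras contains at least one rigid algebra.
   Context: An algebra is a Leibniz algebra if it satisfies $(xy)z=(xz)y+x(yz)$; it is a mono Leibniz algebra if every subalgebra generated by one element is a Leibniz algebra; it is nilpotent if for some $m$ every product of $m$ elements (any bracketing) vanishes. The variety is the Zariski-closed set of bilinear products on a fixed $n$-dimensional complex vector space $V$ (identified with structure constants in $\mathbb{C}^{n^3}$) satisfying these conditions, with $GL(V)$ acting by $(g*\mu)(x,y)=g\mu(g^{-1}x,g^{-1}y)$. An algebra is rigid if its $GL(V)$-orbit is Zariski-open in the variety. *)

theory Defs
  imports Complex_Main
begin

text \<open>The underlying space V = C^n is modelled as the function space 'n \<Rightarrow> complex
  for a finite index type 'n (n = CARD('n) \<ge> 1).  A bilinear product on V is given by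
  its structure constants S (i,j,k) = k-th coordinate of e_i e_j, i.e. a point of C^(n^3).\<close>

type_synonym 'n vec = "'n \<Rightarrow> complex"
type_synonym 'n sconst = "'n \<times> 'n \<times> 'n \<Rightarrow> complex"

definition prod_of :: "('n::finite) sconst \<Rightarrow> 'n vec \<Rightarrow> 'n vec \<Rightarrow> 'n vec" where
  "prod_of S x y = (\<lambda>k. \<Sum>i\<in>UNIV. \<Sum>j\<in>UNIV. x i * y j * S (i, j, k))"

definition basis_vec :: "('n::finite) \<Rightarrow> 'n vec" where
  "basis_vec i = (\<lambda>j. if j = i then 1 else 0)"

definition lin_apply :: "('n::finite \<Rightarrow> 'n \<Rightarrow> complex) \<Rightarrow> 'n vec \<Rightarrow> 'n vec" where
  "lin_apply g x = (\<lambda>i. \<Sum>j\<in>UNIV. g i j * x j)"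

text \<open>GL(V): pairs (g, h) of mutually inverse linear maps.\<close>
definition inv_pair :: "('n::finite \<Rightarrow> 'n \<Rightarrow> complex) \<Rightarrow> ('n \<Rightarrow> 'n \<Rightarrow> complex) \<Rightarrow> bool" where
  "inv_pair g h \<longleftrightarrow> (\<forall>x. lin_apply g (lin_apply h x) = x) \<and> (\<forall>x. lin_apply h (lin_apply g x) = x)"

text \<open>(g * mu)(x,y) = g mu(g^-1 x, g^-1 y), where h = g^-1.\<close>
definition gl_act :: "('n::finite \<Rightarrow> 'n \<Rightarrow> complex) \<Rightarrow> ('n \<Rightarrow> 'n \<Rightarrow> complex) \<Rightarrow> 'n sconst \<Rightarrow> 'n sconst" where
  "gl_act g h S = (\<lambda>(i, j, k). lin_apply g (prod_of S (lin_apply h (basis_vec i)) (lin_apply h (basis_vec j))) k)"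

definition orbit :: "('n::finite) sconst \<Rightarrow> 'n sconst set" where
  "orbit S = {gl_act g h S | g h. inv_pair g h}"

definition leibniz_on :: "('n::finite) sconst \<Rightarrow> 'n vec set \<Rightarrow> bool" where
  "leibniz_on S W \<longleftrightarrow> (\<forall>x\<in>W. \<forall>y\<in>W. \<forall>z\<in>W.
     (\<forall>k. prod_of S (prod_of S x y) z k = prod_of S (prod_of S x z) y k + prod_of S x (prod_of S y z) k))"

definition is_leibniz :: "('n::finite) sconst \<Rightarrow> bool" where
  "is_leibniz S \<longleftrightarrow> leibniz_on S UNIV"

definition is_subalgebra :: "('n::finite) sconst \<Rightarrow> 'n vec set \<Rightarrow> bool" where
  "is_subalgebra S W \<longleftrightarrow> (\<lambda>i. 0) \<in> W \<and> (\<forall>x\<in>W. \<forall>y\<in>W. (\<lambda>i. x i + y i) \<in> W)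
     \<and> (\<forall>c::complex. \<forall>x\<in>W. (\<lambda>i. c * x i) \<in> W) \<and> (\<forall>x\<in>W. \<forall>y\<in>W. prod_of S x y \<in> W)"

definition gen_subalgebra :: "('n::finite) sconst \<Rightarrow> 'n vec \<Rightarrow> 'n vec set" where
  "gen_subalgebra S a = \<Inter>{W. is_subalgebra S W \<and> a \<in> W}"

definition is_mono_leibniz :: "('n::finite) sconst \<Rightarrow> bool" where
  "is_mono_leibniz S \<longleftrightarrow> (\<forall>a. leibniz_on S (gen_subalgebra S a))"

datatype 'a btree = Leaf 'a | Node "'a btree" "'a btree"

fun num_leaves :: "'a btree \<Rightarrow> nat" where
  "num_leaves (Leaf _) = 1"
| "num_leaves (Node l r) = num_leaves l + num_leaves r"

fun eval_tree :: "('n::finite) sconst \<Rightarrow> 'n vec btree \<Rightarrow> 'n vec" where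
  "eval_tree S (Leaf x) = x"
| "eval_tree S (Node l r) = prod_of S (eval_tree S l) (eval_tree S r)"

definition is_nilpotent :: "('n::finite) sconst \<Rightarrow> bool" where
  "is_nilpotent S \<longleftrightarrow> (\<exists>m\<ge>1. \<forall>t. num_leaves t = m \<longrightarrow> eval_tree S t = (\<lambda>k. 0))"

definition nil_mono_leibniz_variety :: "('n::finite) sconst set" where
  "nil_mono_leibniz_variety = {S. is_nilpotent S \<and> is_mono_leibniz S}"

inductive_set poly_fun :: "(('i \<Rightarrow> complex) \<Rightarrow> complex) set" where
  pconst: "(\<lambda>x. c) \<in> poly_fun"
| pvar: "(\<lambda>x. x i) \<in> poly_fun"
| padd: "p \<in> poly_fun \<Longrightarrow> q \<in> poly_fun \<Longrightarrow> (\<lambda>x. p x + q x) \<in> poly_fun"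
| pmult: "p \<in> poly_fun \<Longrightarrow> q \<in> poly_fun \<Longrightarrow> (\<lambda>x. p x * q x) \<in> poly_fun"

definition zariski_closed :: "('i \<Rightarrow> complex) set \<Rightarrow> bool" where
  "zariski_closed C \<longleftrightarrow> (\<exists>P \<subseteq> poly_fun. C = {x. \<forall>p\<in>P. p x = 0})"

definition zariski_open :: "('i \<Rightarrow> complex) set \<Rightarrow> bool" where
  "zariski_open U \<longleftrightarrow> zariski_closed (- U)"

definition rigid_in :: "('n::finite) sconst set \<Rightarrow> 'n sconst \<Rightarrow> bool" where
  "rigid_in X S \<longleftrightarrow> (\<exists>U. zariski_open U \<and> orbit S = X \<inter> U)"

end

theory Submission
  imports Defs "HOL-Analysis.Determinants"
begin

(* The rigid algebra is the null-filiform algebra N: on a basis e_0, ..., e_(n-1) it has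
   e_i e_0 = e_(i+1) and all other products zero. It is Leibniz and nilpotent, and its right powers
   e_0, e_0 e_0, (e_0 e_0) e_0, ... form a basis. Having an element whose right powers
   a, R_a a, ..., R_a^(n-1) a form a basis is a Zariski-open condition (a determinant in the
   structure constants does not vanish), and it is GL(V)-invariant, so the orbit of N lies in this
   open set. Conversely, let S be nilpotent, mono Leibniz and have such an element a. The Leibniz
   identity on the subalgebra generated by a kills every product x R_a^q a with q >= 1, so in the
   basis of right powers only right multiplication by a survives. Nilpotency forces R_a^n a = 0,
   and then S is N written in that basis. *)

section \<open>Enumeration of the basis\<close>

definition ix :: "'n::finite \<Rightarrow> nat" where
  "ix = (SOME f. bij_betw f UNIV {..<CARD('n)})"

definition ix_inv :: "nat \<Rightarrow> 'n::finite" where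
  "ix_inv = inv_into UNIV ix"

lemma bij_betw_ix: "bij_betw (ix :: 'n::finite \<Rightarrow> nat) UNIV {..<CARD('n)}"
proof -
  have "\<exists>f. bij_betw f (UNIV :: 'n set) {..<CARD('n)}"
    using ex_bij_betw_finite_nat[of "UNIV :: 'n set"] by (auto simp: atLeast0LessThan)
  then show ?thesis
    unfolding ix_def by (rule someI_ex)
qed

lemma ix_less [simp]: "ix (i :: 'n::finite) < CARD('n)"
  using bij_betw_apply[OF bij_betw_ix] by blast

lemma ix_inv_ix [simp]: "ix_inv (ix (i :: 'n::finite)) = i"
  using bij_betw_ix[where 'n='n] unfolding ix_inv_def by (simp add: bij_betw_def)

lemma ix_ix_inv [simp]: "m < CARD('n::finite) \<Longrightarrow> ix (ix_inv m :: 'n) = m"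
  using bij_betw_ix[where 'n='n] unfolding ix_inv_def by (simp add: bij_betw_def f_inv_into_f)

lemma ix_diff_less [simp]: "ix (i :: 'n::finite) - m < CARD('n)"
  using ix_less[of i] by linarith

lemma ix_inv_eq_iff: "m < CARD('n::finite) \<Longrightarrow> ix_inv m = (i :: 'n) \<longleftrightarrow> ix i = m"
  by auto

lemma eq_ix_inv_iff: "m < CARD('n::finite) \<Longrightarrow> (i :: 'n) = ix_inv m \<longleftrightarrow> ix i = m"
  by auto

lemma sum_ix_reindex: "(\<Sum>i\<in>UNIV. f i) = (\<Sum>m<CARD('n::finite). f (ix_inv m :: 'n))"
  using sum.reindex_bij_betw[OF bij_betw_ix[where 'n='n], of "\<lambda>m. f (ix_inv m)"] by simp

section \<open>Bilinearity and the GL(V)-action\<close>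

lemma prod_of_sum_left:
  "prod_of S (\<lambda>k. \<Sum>l\<in>A. c l * v l k) y = (\<lambda>k. \<Sum>l\<in>A. c l * prod_of S (v l) y k)"
  unfolding prod_of_def
  by (simp add: sum_distrib_left sum_distrib_right mult_ac sum.swap[of _ A])

lemma prod_of_sum_right:
  "prod_of S x (\<lambda>k. \<Sum>l\<in>A. c l * v l k) = (\<lambda>k. \<Sum>l\<in>A. c l * prod_of S x (v l) k)"
  unfolding prod_of_def
  by (simp add: sum_distrib_left sum_distrib_right mult_ac sum.swap[of _ A])

lemma lin_apply_sum:
  "lin_apply g (\<lambda>k. \<Sum>l\<in>A. c l * v l k) = (\<lambda>k. \<Sum>l\<in>A. c l * lin_apply g (v l) k)"
  unfolding lin_apply_def
  by (simp add: sum_distrib_left mult_ac sum.swap[of _ A])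

lemma lin_apply_add: "lin_apply g (\<lambda>k. x k + y k) = (\<lambda>k. lin_apply g x k + lin_apply g y k)"
  unfolding lin_apply_def by (simp add: distrib_left sum.distrib)

lemma lin_apply_scale: "lin_apply g (\<lambda>k. c * x k) = (\<lambda>k. c * lin_apply g x k)"
  unfolding lin_apply_def by (simp add: sum_distrib_left mult_ac)

lemma lin_apply_zero [simp]: "lin_apply g (\<lambda>k. 0) = (\<lambda>k. 0)"
  unfolding lin_apply_def by simp

lemma lin_apply_basis_vec: "lin_apply g (basis_vec i) = (\<lambda>k. g k i)"
  unfolding lin_apply_def basis_vec_def by (simp add: if_distrib cong: if_cong)

lemma vec_eq_sum_basis_vec: "x = (\<lambda>k. \<Sum>i\<in>UNIV. x i * basis_vec i k)"
  unfolding basis_vec_def by (simp add: if_distrib cong: if_cong)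

lemma prod_of_zero_left [simp]: "prod_of S (\<lambda>k. 0) y = (\<lambda>k. 0)"
  unfolding prod_of_def by simp

lemma prod_of_basis_vec: "prod_of S (basis_vec i) (basis_vec j) k = S (i, j, k)"
proof -
  have "prod_of S (basis_vec i) (basis_vec j) k =
      (\<Sum>a\<in>UNIV. if a = i then \<Sum>b\<in>UNIV. if b = j then S (a, b, k) else 0 else 0)"
    unfolding prod_of_def basis_vec_def by (intro sum.cong) (auto simp: if_distrib[of "\<lambda>z. z * _"] cong: if_cong)
  then show ?thesis by simp
qed

lemma sconst_eqI: "(\<And>x y. prod_of S x y = prod_of T x y) \<Longrightarrow> S = T"
  by (metis prod_of_basis_vec prod_cases3 ext)

lemma prod_of_gl_act:
  "prod_of (gl_act g h S) x y = lin_apply g (prod_of S (lin_apply h x) (lin_apply h y))"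
proof -
  have "prod_of S (lin_apply h x) (lin_apply h y) =
      (\<lambda>k. \<Sum>i\<in>UNIV. x i * (\<Sum>j\<in>UNIV. y j *
         prod_of S (lin_apply h (basis_vec i)) (lin_apply h (basis_vec j)) k))"
    by (subst (1 2) vec_eq_sum_basis_vec)
      (simp add: lin_apply_sum prod_of_sum_left prod_of_sum_right)
  then have "lin_apply g (prod_of S (lin_apply h x) (lin_apply h y)) =
      (\<lambda>k. \<Sum>i\<in>UNIV. x i * (\<Sum>j\<in>UNIV. y j *
         lin_apply g (prod_of S (lin_apply h (basis_vec i)) (lin_apply h (basis_vec j))) k))"
    by (simp only: lin_apply_sum)
  then show ?thesis
    unfolding prod_of_def[of "gl_act g h S"] by (simp add: gl_act_def sum_distrib_left mult_ac)
qed

lemma inv_pair_apply: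
  assumes "inv_pair g h"
  shows "lin_apply g (lin_apply h x) = x" and "lin_apply h (lin_apply g x) = x"
  using assms unfolding inv_pair_def by blast+

lemma prod_of_gl_act_apply:
  "inv_pair g h \<Longrightarrow> prod_of (gl_act g h S) (lin_apply g x) (lin_apply g y) = lin_apply g (prod_of S x y)"
  by (simp add: prod_of_gl_act inv_pair_apply)

lemma eq_gl_actI:
  assumes "inv_pair g h"
    and "\<And>x y. prod_of S (lin_apply g x) (lin_apply g y) = lin_apply g (prod_of T x y)"
  shows "S = gl_act g h T"
proof (rule sconst_eqI)
  fix x y
  show "prod_of S x y = prod_of (gl_act g h T) x y"
    using assms(2)[of "lin_apply h x" "lin_apply h y"] by (simp add: prod_of_gl_act inv_pair_apply[OF assms(1)])
qed

lemma eval_tree_gl_act: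
  "inv_pair g h \<Longrightarrow> eval_tree (gl_act g h S) t = lin_apply g (eval_tree S (map_btree (lin_apply h) t))"
  by (induction t) (simp_all add: prod_of_gl_act inv_pair_apply)

lemma num_leaves_map_btree [simp]: "num_leaves (map_btree f t) = num_leaves t"
  by (induction t) auto

lemma is_nilpotent_gl_act:
  assumes "inv_pair g h" and "is_nilpotent S"
  shows "is_nilpotent (gl_act g h S)"
proof -
  obtain m where "m \<ge> 1" and m: "\<And>t. num_leaves t = m \<Longrightarrow> eval_tree S t = (\<lambda>k. 0)"
    using assms(2) unfolding is_nilpotent_def by blast
  then show ?thesis
    unfolding is_nilpotent_def by (auto simp: eval_tree_gl_act[OF assms(1)])
qed

lemma is_leibniz_gl_act:
  assumes "inv_pair g h" and "is_leibniz S"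
  shows "is_leibniz (gl_act g h S)"
  unfolding is_leibniz_def leibniz_on_def
proof (intro ballI allI)
  fix x y z k
  let ?x = "lin_apply h x" and ?y = "lin_apply h y" and ?z = "lin_apply h z"
  have "prod_of S (prod_of S ?x ?y) ?z =
      (\<lambda>k. prod_of S (prod_of S ?x ?z) ?y k + prod_of S ?x (prod_of S ?y ?z) k)"
    using assms(2) unfolding is_leibniz_def leibniz_on_def by blast
  then show "prod_of (gl_act g h S) (prod_of (gl_act g h S) x y) z k =
      prod_of (gl_act g h S) (prod_of (gl_act g h S) x z) y k +
      prod_of (gl_act g h S) x (prod_of (gl_act g h S) y z) k"
    by (simp add: prod_of_gl_act inv_pair_apply[OF assms(1)] lin_apply_add)
qed

lemma is_leibniz_imp_is_mono_leibniz: "is_leibniz S \<Longrightarrow> is_mono_leibniz S"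
  unfolding is_leibniz_def is_mono_leibniz_def leibniz_on_def by blast

definition mat_of :: "('n::finite \<Rightarrow> 'n \<Rightarrow> complex) \<Rightarrow> complex^'n^'n" where
  "mat_of g = (\<chi> i j. g i j)"

lemma lin_apply_eq_mat_of: "lin_apply g x = vec_nth (mat_of g *v vec_lambda x)"
  by (simp add: lin_apply_def mat_of_def matrix_vector_mult_def mult.commute vec_lambda_inverse)

lemma inv_pair_iff_mat_of:
  "inv_pair g h \<longleftrightarrow> mat_of g ** mat_of h = mat 1 \<and> mat_of h ** mat_of g = mat 1"
proof -
  have comp: "lin_apply g (lin_apply h x) = vec_nth ((mat_of g ** mat_of h) *v vec_lambda x)"
    for g h :: "'a \<Rightarrow> 'a \<Rightarrow> complex" and x
    by (simp add: lin_apply_eq_mat_of matrix_vector_mul_assoc)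
  have "(\<forall>x. lin_apply g (lin_apply h x) = x) \<longleftrightarrow> mat_of g ** mat_of h = mat 1"
    for g h :: "'a \<Rightarrow> 'a \<Rightarrow> complex"
  proof
    assume "\<forall>x. lin_apply g (lin_apply h x) = x"
    then have "vec_nth ((mat_of g ** mat_of h) *v v) = vec_nth v" for v
      unfolding comp by (metis vec_nth_inverse)
    then show "mat_of g ** mat_of h = mat 1"
      by (simp add: matrix_eq vec_nth_inject)
  qed (simp add: comp vec_lambda_inverse)
  then show ?thesis
    unfolding inv_pair_def by blast
qed

lemma ex_inv_pair_iff_det: "(\<exists>h. inv_pair g h) \<longleftrightarrow> det (mat_of g) \<noteq> 0"
proof -
  have "mat_of (\<lambda>i j. B $ i $ j) = B" for B :: "complex^'a^'a"
    by (simp add: mat_of_def vec_eq_iff)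
  then have "(\<exists>h. inv_pair g h) \<longleftrightarrow> invertible (mat_of g)"
    unfolding inv_pair_iff_mat_of invertible_def by metis
  then show ?thesis
    by (simp add: invertible_det_nz)
qed

section \<open>The null-filiform algebra\<close>

definition shift :: "('n::finite \<Rightarrow> complex) \<Rightarrow> ('n \<Rightarrow> complex)" where
  "shift x = (\<lambda>k. if ix k = 0 then 0 else x (ix_inv (ix k - 1)))"

lemma shift_eq_sum:
  fixes k :: "'n::finite"
  shows "shift x k = (\<Sum>i | Suc (ix i) = ix k. x i)"
proof -
  have "{i :: 'n. Suc (ix i) = ix k} = (if ix k = 0 then {} else {ix_inv (ix k - 1)})"
    by (auto simp: eq_ix_inv_iff)
  then show ?thesis
    by (simp add: shift_def)
qed

lemma shift_ix_inv_0 [simp]: "shift x (ix_inv 0) = 0"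
  by (simp add: shift_def)

lemma shift_ix_inv_Suc: "Suc m < CARD('n::finite) \<Longrightarrow> shift x (ix_inv (Suc m) :: 'n) = x (ix_inv m)"
  by (simp add: shift_def)

lemma shift_scale: "shift (\<lambda>k. c * x k) = (\<lambda>k. c * shift x k)"
  unfolding shift_def by auto

lemma shift_basis_vec: "shift (basis_vec j) = (\<lambda>k. if ix k = Suc (ix j) then 1 else 0)"
  unfolding shift_def basis_vec_def by (auto simp: ix_inv_eq_iff eq_ix_inv_iff)

definition null_filiform :: "'n::finite sconst" where
  "null_filiform = (\<lambda>(i, j, k). if ix j = 0 \<and> ix k = Suc (ix i) then 1 else 0)"

lemma prod_of_null_filiform: "prod_of null_filiform x y = (\<lambda>k. y (ix_inv 0) * shift x k)"
proof
  fix k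
  have "prod_of null_filiform x y k = (\<Sum>i\<in>UNIV. if Suc (ix i) = ix k then y (ix_inv 0) * x i else 0)"
    unfolding prod_of_def null_filiform_def
  proof (intro sum.cong refl)
    fix i
    show "(\<Sum>j\<in>UNIV. x i * y j * (case (i, j, k) of (i, j, k) \<Rightarrow>
        if ix j = 0 \<and> ix k = Suc (ix i) then 1 else 0)) =
      (if Suc (ix i) = ix k then y (ix_inv 0) * x i else 0)"
      by (cases "Suc (ix i) = ix k")
        (auto simp: eq_ix_inv_iff[symmetric] if_distrib[of "\<lambda>z. _ * z"] cong: if_cong)
  qed
  then show "prod_of null_filiform x y k = y (ix_inv 0) * shift x k"
    by (simp add: shift_eq_sum sum.If_cases sum_distrib_left)
qed

lemma is_leibniz_null_filiform: "is_leibniz null_filiform"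
  unfolding is_leibniz_def leibniz_on_def by (simp add: prod_of_null_filiform shift_scale)

lemma eval_tree_null_filiform_eq_0:
  "ix k + 1 < num_leaves t \<Longrightarrow> eval_tree null_filiform t k = 0"
proof (induction t arbitrary: k)
  case (Leaf x)
  then show ?case by simp
next
  case (Node l r)
  show ?case
  proof (cases "num_leaves r = 1")
    case True
    then have "eval_tree null_filiform l (ix_inv (ix k - 1)) = 0" if "ix k \<noteq> 0"
      using Node.IH(1) Node.prems that by simp
    then show ?thesis
      by (simp add: prod_of_null_filiform shift_def)
  next
    case False
    moreover have "num_leaves r \<ge> 1"
      by (induction r) auto
    ultimately have "eval_tree null_filiform r (ix_inv 0) = 0"
      using Node.IH(2) by simp
    then show ?thesis
      by (simp add: prod_of_null_filiform)
  qed
qed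

lemma is_nilpotent_null_filiform: "is_nilpotent (null_filiform :: 'n::finite sconst)"
  unfolding is_nilpotent_def
  by (rule exI[of _ "CARD('n) + 1"]) (auto intro!: ext eval_tree_null_filiform_eq_0)

section \<open>Right powers and the open set of right-cyclic algebras\<close>

definition right_mult ::
    "'n::finite sconst \<Rightarrow> ('n \<Rightarrow> complex) \<Rightarrow> ('n \<Rightarrow> complex) \<Rightarrow> ('n \<Rightarrow> complex)" where
  "right_mult S a x = prod_of S x a"

lemma right_mult_null_filiform_funpow:
  "(right_mult null_filiform (basis_vec (ix_inv 0)) ^^ ix i) (basis_vec (ix_inv 0)) = basis_vec i"
proof -
  have "(right_mult null_filiform (basis_vec (ix_inv 0)) ^^ m) (basis_vec (ix_inv 0)) =
      basis_vec (ix_inv m :: 'a)" if "m < CARD('a)" for m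
    using that
  proof (induction m)
    case (Suc m)
    then show ?case
      by (simp add: right_mult_def prod_of_null_filiform shift_basis_vec basis_vec_def[of "ix_inv 0"])
        (auto simp: basis_vec_def eq_ix_inv_iff)
  qed simp
  then show ?thesis
    by (metis ix_inv_ix ix_less)
qed

definition krylov :: "'n::finite sconst \<Rightarrow> ('n \<Rightarrow> complex) \<Rightarrow> 'n \<Rightarrow> 'n \<Rightarrow> complex" where
  "krylov S a k i = (right_mult S a ^^ ix i) a k"

definition right_cyclic_algebras :: "'n::finite sconst set" where
  "right_cyclic_algebras = {S. \<exists>a h. inv_pair (krylov S a) h}"

lemma right_mult_funpow_gl_act:
  "inv_pair g h \<Longrightarrow>
    (right_mult (gl_act g h S) (lin_apply g a) ^^ m) (lin_apply g x) = lin_apply g ((right_mult S a ^^ m) x)"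
  by (induction m) (simp_all add: right_mult_def prod_of_gl_act_apply)

lemma krylov_gl_act_null_filiform:
  assumes "inv_pair g h"
  shows "krylov (gl_act g h null_filiform) (lin_apply g (basis_vec (ix_inv 0))) = g"
proof (intro ext)
  fix k i
  show "krylov (gl_act g h null_filiform) (lin_apply g (basis_vec (ix_inv 0))) k i = g k i"
    by (simp only: krylov_def right_mult_funpow_gl_act[OF assms] right_mult_null_filiform_funpow)
      (simp add: lin_apply_basis_vec)
qed

lemma orbit_null_filiform_subset: "orbit null_filiform \<subseteq> nil_mono_leibniz_variety \<inter> right_cyclic_algebras"
proof
  fix T assume "T \<in> orbit null_filiform"
  then obtain g h where gh: "inv_pair g h" and T: "T = gl_act g h null_filiform"
    unfolding orbit_def by blast
  have "T \<in> nil_mono_leibniz_variety"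
    unfolding nil_mono_leibniz_variety_def T
    using is_nilpotent_gl_act[OF gh is_nilpotent_null_filiform]
      is_leibniz_imp_is_mono_leibniz[OF is_leibniz_gl_act[OF gh is_leibniz_null_filiform]]
    by simp
  moreover have "T \<in> right_cyclic_algebras"
    unfolding right_cyclic_algebras_def T
    by (intro CollectI exI[of _ "lin_apply g (basis_vec (ix_inv 0))"] exI[of _ h])
      (simp add: krylov_gl_act_null_filiform[OF gh] gh)
  ultimately show "T \<in> nil_mono_leibniz_variety \<inter> right_cyclic_algebras"
    by blast
qed

lemma poly_fun_sum: "(\<And>x. x \<in> A \<Longrightarrow> f x \<in> poly_fun) \<Longrightarrow> (\<lambda>S. \<Sum>x\<in>A. f x S) \<in> poly_fun"
proof (induction A rule: infinite_finite_induct)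
  case (infinite A)
  then show ?case using poly_fun.pconst[of 0] by simp
next
  case empty
  then show ?case using poly_fun.pconst[of 0] by simp
next
  case (insert x A)
  then show ?case using poly_fun.padd[of "f x" "\<lambda>S. \<Sum>x\<in>A. f x S"] by simp
qed

lemma poly_fun_prod: "(\<And>x. x \<in> A \<Longrightarrow> f x \<in> poly_fun) \<Longrightarrow> (\<lambda>S. \<Prod>x\<in>A. f x S) \<in> poly_fun"
proof (induction A rule: infinite_finite_induct)
  case (infinite A)
  then show ?case using poly_fun.pconst[of 1] by simp
next
  case empty
  then show ?case using poly_fun.pconst[of 1] by simp
next
  case (insert x A)
  then show ?case using poly_fun.pmult[of "f x" "\<lambda>S. \<Prod>x\<in>A. f x S"] by simp
qed

lemma poly_fun_det:
  "(\<And>i j. (\<lambda>S. M S i j) \<in> poly_fun) \<Longrightarrow> (\<lambda>S. det (mat_of (M S))) \<in> poly_fun"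
  unfolding det_def mat_of_def
  by (auto intro!: poly_fun_sum poly_fun_prod poly_fun.pmult poly_fun.pconst)

lemma poly_fun_right_mult_funpow: "(\<lambda>S. (right_mult S a ^^ m) x k) \<in> poly_fun"
proof (induction m arbitrary: k)
  case 0
  then show ?case by (simp add: poly_fun.pconst)
next
  case (Suc m)
  then show ?case
    unfolding funpow.simps o_apply right_mult_def prod_of_def
    by (intro poly_fun_sum poly_fun.pmult poly_fun.pconst poly_fun.pvar)
qed

lemma zariski_open_right_cyclic_algebras: "zariski_open right_cyclic_algebras"
proof -
  let ?P = "range (\<lambda>a S. det (mat_of (krylov S a)))"
  have "?P \<subseteq> poly_fun"
    by (auto intro!: poly_fun_det simp: krylov_def poly_fun_right_mult_funpow)
  moreover have "- right_cyclic_algebras = {S. \<forall>p\<in>?P. p S = 0}"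
    by (auto simp: right_cyclic_algebras_def ex_inv_pair_iff_det)
  ultimately show ?thesis
    unfolding zariski_open_def zariski_closed_def by blast
qed

section \<open>Nilpotent mono Leibniz algebras with a right-cyclic element\<close>

lemma funpow_right_mult_in_gen_subalgebra: "(right_mult S a ^^ m) a \<in> gen_subalgebra S a"
  unfolding gen_subalgebra_def
proof (intro InterI, clarify)
  fix W
  assume "is_subalgebra S W" and "a \<in> W"
  then show "(right_mult S a ^^ m) a \<in> W"
    by (induction m) (auto simp: is_subalgebra_def right_mult_def)
qed

(* The Leibniz identity with z = a reads x (y a) = (x y) a - (x a) y; induct on q. *)
lemma mono_leibniz_prod_right_power_eq_0:
  assumes "leibniz_on S (gen_subalgebra S a)"
  shows "prod_of S ((right_mult S a ^^ p) a) ((right_mult S a ^^ Suc q) a) = (\<lambda>k. 0)"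
proof -
  define b where "b m = (right_mult S a ^^ m) a" for m
  have b_0: "b 0 = a" and b_Suc: "b (Suc m) = prod_of S (b m) a" for m
    by (simp_all add: b_def right_mult_def)
  have leibniz: "prod_of S (prod_of S (b p) (b q)) a k =
      prod_of S (b (Suc p)) (b q) k + prod_of S (b p) (b (Suc q)) k" for p q k
  proof -
    have "b p \<in> gen_subalgebra S a" "b q \<in> gen_subalgebra S a" "b 0 \<in> gen_subalgebra S a"
      unfolding b_def by (rule funpow_right_mult_in_gen_subalgebra)+
    then show ?thesis
      using assms unfolding leibniz_on_def b_Suc b_0 by blast
  qed
  have "prod_of S (b p) (b (Suc q)) = (\<lambda>k. 0)"
  proof (induction q arbitrary: p)
    case 0
    have "prod_of S (b p) (b 1) k = 0" for k
      using leibniz[of p 0 k] by (simp add: b_0 b_Suc[symmetric])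
    then show ?case by auto
  next
    case (Suc q)
    have "prod_of S (b p) (b (Suc (Suc q))) k = 0" for k
      using leibniz[of p "Suc q" k] by (simp add: Suc.IH)
    then show ?case by auto
  qed
  then show ?thesis
    unfolding b_def .
qed

lemma lin_apply_krylov:
  fixes S :: "'n::finite sconst"
  shows "lin_apply (krylov S a) y = (\<lambda>k. \<Sum>m<CARD('n). y (ix_inv m) * (right_mult S a ^^ m) a k)"
  unfolding lin_apply_def krylov_def sum_ix_reindex by (auto simp: mult.commute intro!: sum.cong)

lemma right_mult_krylov:
  fixes S :: "'n::finite sconst"
  shows "right_mult S a (lin_apply (krylov S a) y) =
    (\<lambda>k. lin_apply (krylov S a) (shift y) k + y (ix_inv (CARD('n) - 1)) * (right_mult S a ^^ CARD('n)) a k)"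
proof
  fix k
  define b where "b m = (right_mult S a ^^ m) a k" for m
  obtain N where N: "CARD('n) = Suc N"
    using not0_implies_Suc by force
  have "right_mult S a (lin_apply (krylov S a) y) k = (\<Sum>m<CARD('n). y (ix_inv m) * b (Suc m))"
    by (simp add: right_mult_def lin_apply_krylov prod_of_sum_left b_def)
  also have "\<dots> = (\<Sum>m<N. y (ix_inv m) * b (Suc m)) + y (ix_inv N) * b (Suc N)"
    by (simp add: N)
  also have "(\<Sum>m<N. y (ix_inv m) * b (Suc m)) = (\<Sum>m<N. shift y (ix_inv (Suc m)) * b (Suc m))"
    by (intro sum.cong) (simp_all add: shift_ix_inv_Suc N)
  also have "\<dots> = lin_apply (krylov S a) (shift y) k"
    by (simp add: lin_apply_krylov N b_def sum.lessThan_Suc_shift del: sum.lessThan_Suc)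
  finally show "right_mult S a (lin_apply (krylov S a) y) k =
      lin_apply (krylov S a) (shift y) k + y (ix_inv (CARD('n) - 1)) * (right_mult S a ^^ CARD('n)) a k"
    by (simp add: N b_def)
qed

lemma is_nilpotent_imp_right_mult_funpow_eq_0:
  assumes "is_nilpotent S"
  obtains K where "\<And>x. (right_mult S a ^^ K) x = (\<lambda>k. 0)"
proof -
  obtain m where "m \<ge> 1" and m: "\<And>t. num_leaves t = m \<Longrightarrow> eval_tree S t = (\<lambda>k. 0)"
    using assms unfolding is_nilpotent_def by blast
  have left_comb: "\<exists>t. num_leaves t = Suc K \<and> eval_tree S t = (right_mult S a ^^ K) x" for K x
  proof (induction K)
    case 0
    show ?case by (rule exI[of _ "Leaf x"]) simp
  next
    case (Suc K)
    then obtain t where "num_leaves t = Suc K" and "eval_tree S t = (right_mult S a ^^ K) x"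
      by blast
    then show ?case
      by (intro exI[of _ "Node t (Leaf a)"]) (simp add: right_mult_def[of S a "(right_mult S a ^^ K) x"])
  qed
  have "(right_mult S a ^^ (m - 1)) x = (\<lambda>k. 0)" for x
  proof -
    obtain t where "num_leaves t = m" and "eval_tree S t = (right_mult S a ^^ (m - 1)) x"
      using left_comb[of "m - 1" x] \<open>m \<ge> 1\<close> by auto
    then show ?thesis
      using m by simp
  qed
  then show thesis
    by (rule that)
qed

(* F is the companion operator of t^n - (c_0 + c_1 t + ... + c_(n-1) t^(n-1)). If c ~= 0 and i0 is
   the lowest nonzero coordinate of c, then F maps the vectors vanishing below i0 injectively into
   themselves, so no power of F kills c. *)
lemma companion_nilpotent_imp_eq_0:
  fixes c :: "'n::finite \<Rightarrow> complex"
  assumes "\<And>y. ((\<lambda>y k. shift y k + y (ix_inv (CARD('n) - 1)) * c k) ^^ K) y = (\<lambda>k. 0)"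
  shows "c = (\<lambda>k. 0)"
proof (rule ccontr)
  define last :: 'n where "last = ix_inv (CARD('n) - 1)"
  define F where "F = (\<lambda>y k. shift y k + y last * c k)"
  assume "c \<noteq> (\<lambda>k. 0)"
  then obtain i0 where "c i0 \<noteq> 0" and least: "\<And>i. c i \<noteq> 0 \<Longrightarrow> ix i0 \<le> ix i"
    using ex_has_least_nat[of "\<lambda>i. c i \<noteq> 0" _ ix] by blast
  define tail where "tail y \<longleftrightarrow> (\<forall>i. ix i < ix i0 \<longrightarrow> y i = 0)" for y :: "'n \<Rightarrow> complex"
  have shift_tail: "shift y i = 0" if "tail y" "ix i \<le> ix i0" for y i
    using that unfolding tail_def shift_def by auto
  have F_tail: "tail (F y)" if "tail y" for y
    using that shift_tail least unfolding tail_def F_def by fastforce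
  have F_inj: "y = (\<lambda>k. 0)" if "tail y" and Fy: "F y = (\<lambda>k. 0)" for y
  proof
    fix i
    have "y last * c i0 = 0"
      using fun_cong[OF Fy, of i0] shift_tail[OF \<open>tail y\<close>] by (simp add: F_def)
    then have "y last = 0"
      using \<open>c i0 \<noteq> 0\<close> by simp
    then have shift_y: "shift y = (\<lambda>k. 0)"
      using Fy by (simp add: F_def)
    show "y i = 0"
    proof (cases "i = last")
      case False
      then have "ix i \<noteq> CARD('n) - 1"
        unfolding last_def by (metis ix_inv_ix)
      then have "Suc (ix i) < CARD('n)"
        using ix_less[of i] by linarith
      then show ?thesis
        using fun_cong[OF shift_y, of "ix_inv (Suc (ix i))"] by (simp add: shift_ix_inv_Suc)
    qed (simp add: \<open>y last = 0\<close>)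
  qed
  have "tail ((F ^^ j) c) \<and> (F ^^ j) c \<noteq> (\<lambda>k. 0)" for j
  proof (induction j)
    case 0
    show ?case
      using least \<open>c \<noteq> (\<lambda>k. 0)\<close> unfolding tail_def by fastforce
  next
    case (Suc j)
    then show ?case
      using F_tail F_inj by auto
  qed
  then show False
    using assms[of c] unfolding F_def last_def by blast
qed

(* In the basis of right powers, right multiplication by a is the companion operator whose last
   column holds the coordinates of R_a^n a. *)
lemma nilpotent_right_power_card_eq_0:
  fixes S :: "'n::finite sconst"
  assumes "is_nilpotent S" and gh: "inv_pair (krylov S a) h"
  shows "(right_mult S a ^^ CARD('n)) a = (\<lambda>k. 0)"
proof -
  define c where "c = lin_apply h ((right_mult S a ^^ CARD('n)) a)"
  define F where "F = (\<lambda>y k. shift y k + y (ix_inv (CARD('n) - 1)) * c k)"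
  have F: "F y = lin_apply h (right_mult S a (lin_apply (krylov S a) y))" for y
    by (simp add: F_def c_def right_mult_krylov lin_apply_add lin_apply_scale inv_pair_apply[OF gh])
  have F_funpow: "(F ^^ K) y = lin_apply h ((right_mult S a ^^ K) (lin_apply (krylov S a) y))" for K y
    by (induction K) (simp_all add: F inv_pair_apply[OF gh])
  obtain K where "\<And>x. (right_mult S a ^^ K) x = (\<lambda>k. 0)"
    using is_nilpotent_imp_right_mult_funpow_eq_0[OF assms(1), where a = a] by blast
  then have "c = (\<lambda>k. 0)"
    using companion_nilpotent_imp_eq_0[of K c] F_funpow unfolding F_def by simp
  then show ?thesis
    using inv_pair_apply(1)[OF gh, of "(right_mult S a ^^ CARD('n)) a"] unfolding c_def by simp
qed

lemma mono_leibniz_prod_krylov: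
  fixes S :: "'n::finite sconst"
  assumes "leibniz_on S (gen_subalgebra S a)"
  shows "prod_of S (lin_apply (krylov S a) x) (lin_apply (krylov S a) y) =
    (\<lambda>k. y (ix_inv 0) * right_mult S a (lin_apply (krylov S a) x) k)"
proof -
  have right_power_eq_0:
    "prod_of S (lin_apply (krylov S a) x) ((right_mult S a ^^ Suc q) a) = (\<lambda>k. 0)" for q
    by (simp add: lin_apply_krylov prod_of_sum_left mono_leibniz_prod_right_power_eq_0[OF assms]
        del: funpow.simps)
  obtain N where "CARD('n) = Suc N"
    using not0_implies_Suc by force
  then show ?thesis
    unfolding lin_apply_krylov[of S a y] prod_of_sum_right
    by (simp add: sum.lessThan_Suc_shift right_power_eq_0 right_mult_def funpow_0
        del: sum.lessThan_Suc funpow.simps)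
qed

lemma right_cyclic_subset_orbit_null_filiform:
  "nil_mono_leibniz_variety \<inter> right_cyclic_algebras \<subseteq> orbit null_filiform"
proof
  fix S
  assume "S \<in> nil_mono_leibniz_variety \<inter> right_cyclic_algebras"
  then obtain a h where gh: "inv_pair (krylov S a) h"
    and nil: "is_nilpotent S" and leib: "leibniz_on S (gen_subalgebra S a)"
    unfolding right_cyclic_algebras_def nil_mono_leibniz_variety_def is_mono_leibniz_def by blast
  have "S = gl_act (krylov S a) h null_filiform"
  proof (rule eq_gl_actI[OF gh])
    fix x y
    show "prod_of S (lin_apply (krylov S a) x) (lin_apply (krylov S a) y) =
        lin_apply (krylov S a) (prod_of null_filiform x y)"
      by (simp add: mono_leibniz_prod_krylov[OF leib] right_mult_krylov
          nilpotent_right_power_card_eq_0[OF nil gh] prod_of_null_filiform lin_apply_scale)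
  qed
  then show "S \<in> orbit null_filiform"
    using gh unfolding orbit_def by blast
qed

theorem mainTheorem8:
  shows "\<exists>S::('n::finite) sconst. S \<in> nil_mono_leibniz_variety \<and> rigid_in nil_mono_leibniz_variety S"
proof (intro exI conjI)
  show "null_filiform \<in> nil_mono_leibniz_variety"
    unfolding nil_mono_leibniz_variety_def
    using is_nilpotent_null_filiform is_leibniz_imp_is_mono_leibniz[OF is_leibniz_null_filiform] by simp
  have "orbit null_filiform = nil_mono_leibniz_variety \<inter> right_cyclic_algebras"
    using orbit_null_filiform_subset right_cyclic_subset_orbit_null_filiform by (rule subset_antisym)
  then show "rigid_in nil_mono_leibniz_variety (null_filiform :: 'n sconst)"
    unfolding rigid_in_def using zariski_open_right_cyclic_algebras by blast
qed

end
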